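(* Let $\mathcal{X},\mathcal{Y}$ be mm-spaces and $p\in[1,\infty)$. Then $$d_{\mathrm{GM},p}(\mathcal{X},\mathcal{Y})\geq\inf_{\phi\in\mathcal{T}(\mu_X,\mu_Y)}\int_X\left(\int_0^1\big|h^{-1}_{\mathcal{X}}(x,u)-h^{-1}_{\mathcal{Y}}(\phi(x),u)\big|^p\,du\right)^{1/p}\mu_X(dx).$$ In particular, for $p=1$, $$d_{\mathrm{GM},1}(\mathcal{X},\mathcal{Y})\geq\inf_{\phi\in\mathcal{T}(\mu_X,\mu_Y)}\int_X c_{\mathcal{X},\mathcal{Y}}(x,\phi(x))\,\mu_X(dx).$$
   Context: A metric measure space (mm-space) is a triple $(X,d_X,\mu_X)$ with $(X,d_X)$ compact metric and $\mu_X$ a Borel probability measure of full support. $\mathcal{T}(\mu_X,\mu_Y)$ is the set of measurable $\phi:X\to Y$ with $\phi_\#\mu_X=\mu_Y$, and $$d_{\mathrm{GM},p}(\mathcal{X},\mathcal{Y})=\inf_{\phi\in\mathcal{T}(\mu_X,\mu_Y)}\left(\iint_{X\times X}|d_X(x,x')-d_Y(\phi(x),\phi(x'))|^p\,\mu_X(dx)\mu_X(dx')\right)^{1/p}$$ ($=\infty$ if $\mathcal{T}(\mu_X,\mu_Y)=\emptyset$). The local distance distribution is $h_{\mathcal{X}}(x,t)=\mu_X(\overline{B_t(x)})$ for $x\in X$, $t\geq0$, where $\overline{B_t(x)}=\{x'\in X: d_X(x,x')\le t\}$; its generalized inverse is $h^{-1}_{\mathcal{X}}(x,u)=\inf\{r\geq0: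 h_{\mathcal{X}}(x,r)>u\}$ for $u\in[0,1]$. The cost function is $c_{\mathcal{X},\mathcal{Y}}(x,y)=\int_0^\infty|h_{\mathcal{X}}(x,t)-h_{\mathcal{Y}}(y,t)|\,dt$. *)

theory Defs
  imports "HOL-Probability.Probability"
begin

definition mm_space :: "'a::metric_space measure \<Rightarrow> bool" where
  "mm_space M \<longleftrightarrow> prob_space M \<and> compact (space M) \<and>
     sets M = sets (restrict_space borel (space M)) \<and>
     (\<forall>x\<in>space M. \<forall>e>0. 0 < measure M (ball x e \<inter> space M))"

definition transport_maps :: "'a measure \<Rightarrow> 'b measure \<Rightarrow> ('a \<Rightarrow> 'b) set" where
  "transport_maps M N = {\<phi>. \<phi> \<in> M \<rightarrow>\<^sub>M N \<and> distr M N \<phi> = N}"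

text \<open>Gromov-Monge distance; the infimum over the empty set is +infinity.\<close>
definition dGM :: "real \<Rightarrow> 'a::metric_space measure \<Rightarrow> 'b::metric_space measure \<Rightarrow> ereal" where
  "dGM p M N = (INF \<phi>\<in>transport_maps M N.
     ereal ((integral\<^sup>L (M \<Otimes>\<^sub>M M)
        (\<lambda>(x, x'). \<bar>dist x x' - dist (\<phi> x) (\<phi> x')\<bar> powr p)) powr (1 / p)))"

definition ldd :: "'a::metric_space measure \<Rightarrow> 'a \<Rightarrow> real \<Rightarrow> real" where
  "ldd M x t = measure M (cball x t \<inter> space M)"

definition ldd_inv :: "'a::metric_space measure \<Rightarrow> 'a \<Rightarrow> real \<Rightarrow> real" where
  "ldd_inv M x u = Inf {r. 0 \<le> r \<and> ldd M x r > u}"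

definition cost :: "'a::metric_space measure \<Rightarrow> 'b::metric_space measure \<Rightarrow> 'a \<Rightarrow> 'b \<Rightarrow> real" where
  "cost M N x y = (\<integral>t\<in>{0..}. \<bar>ldd M x t - ldd N y t\<bar> \<partial>lborel)"

end

(*
  Fix a transport map \<phi> and a point x. Under \<mu>_X the random variables x' \<mapsto> d_X(x, x') and
  x' \<mapsto> d_Y(\<phi> x, \<phi> x') have distribution functions h_X(x, _) and h_Y(\<phi> x, _), because \<phi>
  pushes \<mu>_X to \<mu>_Y. Among all couplings of two real distributions, the quantile coupling is
  cheapest for the cost |s - t|^p, and for p = 1 the integral of |F - G| is a lower bound as well.
  Both facts follow by writing (s - t)\<^sub>+^p as the integral of the kernel p (p - 1) (b - a)^(p - 2)
  over {t \<le> a < b < s} (for p = 1, the Lebesgue measure of [t, s)): the quantile coupling puts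
  mass at most (G a - F b)\<^sub>+ on {Q_G \<le> a, b < Q_F}, while any coupling puts at least that much
  mass on {Y \<le> a, b < X}. This bounds the inner integral by \<integral> |d_X(x, x') - d_Y(\<phi> x, \<phi> x')|^p;
  integrating the p-th root over x and using Jensen's inequality for t \<mapsto> t^(1/p) gives the
  (1/p)-th power of the distortion of \<phi>, and the infimum over \<phi> gives d_GM,p.
*)

theory Submission
  imports Defs "HOL-Real_Asymp.Real_Asymp"
begin

lemma nn_integral_FTC_Ioo:
  fixes f F :: "real \<Rightarrow> real"
  assumes "a < b" and f_borel[measurable]: "f \<in> borel_measurable borel"
    and F': "\<And>x. a < x \<Longrightarrow> x < b \<Longrightarrow> DERIV F x :> f x"
    and nonneg: "\<And>x. a < x \<Longrightarrow> x < b \<Longrightarrow> 0 \<le> f x"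
    and cont: "continuous_on {a..b} F"
  shows "(\<integral>\<^sup>+x. ennreal (f x) * indicator {a<..<b} x \<partial>lborel) = ennreal (F b - F a)"
proof -
  define d where "d n = (b - a) / (real n + 3)" for n :: nat
  define c where "c n = a + d n" for n
  define e where "e n = b - d n" for n
  define g where "g n x = ennreal (f x) * indicator {c n..e n} x" for n x
  have d_pos: "0 < d n" for n
    using \<open>a < b\<close> unfolding d_def by simp
  have d_le: "d n \<le> (b - a) / 2" for n
    using \<open>a < b\<close> unfolding d_def by (intro divide_left_mono) auto
  have d_decr: "d (Suc n) \<le> d n" for n
    using \<open>a < b\<close> unfolding d_def by (auto intro!: divide_left_mono)
  have d_0: "d \<longlonglongrightarrow> 0"
    unfolding d_def by real_asymp
  have inside: "c n \<in> {a..b}" "e n \<in> {a..b}" for n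
    using d_pos[of n] d_le[of n] by (auto simp: c_def e_def field_simps)
  have "g n x \<le> g (Suc n) x" for n x
    using d_decr[of n] by (auto simp: g_def c_def e_def split: split_indicator)
  then have "incseq g"
    by (intro incseq_SucI le_funI)
  moreover have "(\<lambda>n. g n x) \<longlonglongrightarrow> ennreal (f x) * indicator {a<..<b} x" for x
  proof (cases "a < x \<and> x < b")
    case True
    have "eventually (\<lambda>n. d n < min (x - a) (b - x)) sequentially"
      using True by (intro order_tendstoD(2)[OF d_0]) simp
    then have "eventually (\<lambda>n. g n x = ennreal (f x) * indicator {a<..<b} x) sequentially"
      by eventually_elim (use True in \<open>auto simp: g_def c_def e_def split: split_indicator\<close>)
    then show ?thesis by (rule tendsto_eventually)
  next
    case False
    then have "g n x = 0" for n using d_pos[of n]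
      by (auto simp: g_def c_def e_def split: split_indicator)
    with False show ?thesis by (auto split: split_indicator)
  qed
  ultimately have "(\<lambda>n. integral\<^sup>N lborel (g n))
      \<longlonglongrightarrow> (\<integral>\<^sup>+x. ennreal (f x) * indicator {a<..<b} x \<partial>lborel)"
    by (intro nn_integral_LIMSEQ) (simp_all add: g_def[abs_def])
  moreover have "(\<lambda>n. integral\<^sup>N lborel (g n)) \<longlonglongrightarrow> ennreal (F b - F a)"
  proof -
    have "integral\<^sup>N lborel (g n) = ennreal (F (e n) - F (c n))" for n
      unfolding g_def
      using d_le[of n] d_pos[of n] F' nonneg \<open>a < b\<close>
      by (intro nn_integral_FTC_Icc) (auto simp: c_def e_def field_simps)
    moreover have "(\<lambda>n. F (e n) - F (c n)) \<longlonglongrightarrow> F b - F a"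
    proof (intro tendsto_diff)
      have "c \<longlonglongrightarrow> a" "e \<longlonglongrightarrow> b"
        unfolding c_def[abs_def] e_def[abs_def]
        using tendsto_add[OF tendsto_const d_0] tendsto_diff[OF tendsto_const d_0] by simp_all
      then show "(\<lambda>n. F (e n)) \<longlonglongrightarrow> F b" "(\<lambda>n. F (c n)) \<longlonglongrightarrow> F a"
        using \<open>a < b\<close> inside
        by (auto intro!: continuous_on_tendsto_compose[OF cont, unfolded o_def] always_eventually)
    qed
    ultimately show ?thesis by simp
  qed
  ultimately show ?thesis by (rule LIMSEQ_unique)
qed

lemma nn_integral_powr_from_left:
  fixes a b q :: real
  assumes "0 < q" "a < b"
  shows "(\<integral>\<^sup>+s. ennreal (q * (s - a) powr (q - 1)) * indicator {a<..<b} s \<partial>lborel)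
    = ennreal ((b - a) powr q)"
proof -
  have "(\<integral>\<^sup>+s. ennreal (q * (s - a) powr (q - 1)) * indicator {a<..<b} s \<partial>lborel)
    = ennreal ((b - a) powr q - (a - a) powr q)"
  proof (rule nn_integral_FTC_Ioo)
    show "((\<lambda>s. (s - a) powr q) has_real_derivative q * (s - a) powr (q - 1)) (at s)" if "a < s" for s
      using that by (auto intro!: derivative_eq_intros)
    show "continuous_on {a..b} (\<lambda>s. (s - a) powr q)"
      using \<open>0 < q\<close> by (intro continuous_on_powr') (auto intro!: continuous_intros)
  qed (use assms in auto)
  then show ?thesis by simp
qed

lemma nn_integral_powr_from_right:
  fixes a b q :: real
  assumes "0 < q" "a < b"
  shows "(\<integral>\<^sup>+s. ennreal (q * (b - s) powr (q - 1)) * indicator {a<..<b} s \<partial>lborel)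
    = ennreal ((b - a) powr q)"
proof -
  have "(\<integral>\<^sup>+s. ennreal (q * (b - s) powr (q - 1)) * indicator {a<..<b} s \<partial>lborel)
    = ennreal ((- ((b - b) powr q)) - (- ((b - a) powr q)))"
  proof (rule nn_integral_FTC_Ioo)
    show "((\<lambda>s. - ((b - s) powr q)) has_real_derivative q * (b - s) powr (q - 1)) (at s)" if "s < b" for s
      using that by (auto intro!: derivative_eq_intros)
    show "continuous_on {a..b} (\<lambda>s. - ((b - s) powr q))"
      using \<open>0 < q\<close> by (intro continuous_intros continuous_on_powr') (auto intro!: continuous_intros)
  qed (use assms in auto)
  then show ?thesis by simp
qed

text \<open>The second derivative of \<open>s \<mapsto> s powr p\<close> at \<open>s = t - r\<close>, so that
  \<open>(x - y)\<^sub>+ powr p\<close> is its integral over \<open>y \<le> r < t < x\<close>.\<close>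

definition power_kernel :: "real \<Rightarrow> real \<times> real \<Rightarrow> ennreal" where
  "power_kernel p z = ennreal (if fst z < snd z then p * (p - 1) * (snd z - fst z) powr (p - 2) else 0)"

lemma borel_measurable_power_kernel[measurable]:
  "power_kernel p \<in> borel_measurable (lborel \<Otimes>\<^sub>M lborel)"
  unfolding power_kernel_def by measurable

lemma pos_part_powr_eq_nn_integral_power_kernel:
  fixes p x y :: real
  assumes "1 < p"
  shows "ennreal (max 0 (x - y) powr p) =
    (\<integral>\<^sup>+z. power_kernel p z * indicator {z. y \<le> fst z \<and> snd z < x} z \<partial>(lborel \<Otimes>\<^sub>M lborel))"
proof -
  have inner: "(\<integral>\<^sup>+r. power_kernel p (r, t) * indicator {z. y \<le> fst z \<and> snd z < x} (r, t) \<partial>lborel)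
      = ennreal (p * (t - y) powr (p - 1)) * indicator {y<..<x} t" for t
  proof (cases "y < t \<and> t < x")
    case True
    have "(\<integral>\<^sup>+r. power_kernel p (r, t) * indicator {z. y \<le> fst z \<and> snd z < x} (r, t) \<partial>lborel)
       = (\<integral>\<^sup>+r. ennreal p * (ennreal ((p - 1) * (t - r) powr (p - 1 - 1)) * indicator {y<..<t} r) \<partial>lborel)"
      using AE_lborel_singleton[of y] True \<open>1 < p\<close>
      by (intro nn_integral_cong_AE) (auto simp: power_kernel_def ennreal_mult' mult.assoc split: split_indicator)
    also have "\<dots> = ennreal p * (\<integral>\<^sup>+r. ennreal ((p - 1) * (t - r) powr (p - 1 - 1)) * indicator {y<..<t} r \<partial>lborel)"
      by (rule nn_integral_cmult) measurable
    also have "\<dots> = ennreal (p * (t - y) powr (p - 1))"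
      using True \<open>1 < p\<close> by (subst nn_integral_powr_from_right) (simp_all add: ennreal_mult)
    finally show ?thesis using True by simp
  next
    case False
    then have "power_kernel p (r, t) * indicator {z. y \<le> fst z \<and> snd z < x} (r, t) = 0" for r
      by (auto simp: power_kernel_def split: split_indicator)
    with False show ?thesis by (simp only:) (simp split: split_indicator)
  qed
  have "(\<integral>\<^sup>+z. power_kernel p z * indicator {z. y \<le> fst z \<and> snd z < x} z \<partial>(lborel \<Otimes>\<^sub>M lborel))
      = (\<integral>\<^sup>+t. ennreal (p * (t - y) powr (p - 1)) * indicator {y<..<x} t \<partial>lborel)"
    by (simp add: lborel_pair.nn_integral_snd[symmetric] inner)
  also have "\<dots> = ennreal (max 0 (x - y) powr p)"
    using \<open>1 < p\<close> by (cases "y < x") (simp_all add: nn_integral_powr_from_left)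
  finally show ?thesis ..
qed

lemma ennreal_diff_eq_nn_integral_indicator:
  "ennreal (x - y) = (\<integral>\<^sup>+t. indicator {t. y \<le> t \<and> t < x} t \<partial>lborel)"
proof -
  have "{t. y \<le> t \<and> t < x} = {y..<x}" by auto
  then show ?thesis by (cases "y \<le> x") (auto simp: ennreal_neg)
qed

lemma cdf_distr:
  assumes "X \<in> borel_measurable P"
  shows "cdf (distr P borel X) t = measure P {\<omega>\<in>space P. X \<omega> \<le> t}"
proof -
  have "X -` {..t} \<inter> space P = {\<omega>\<in>space P. X \<omega> \<le> t}" by auto
  then show ?thesis
    using assms by (simp add: cdf_def measure_distr)
qed

lemma borel_measurable_cdf:
  assumes "finite_borel_measure M"
  shows "cdf M \<in> borel_measurable borel"
  using finite_borel_measure.cdf_nondecreasing[OF assms]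
  by (intro borel_measurable_mono monoI) simp

text \<open>Only \<open>u \<in> [0, 1)\<close> is constrained: \<open>{1}\<close> is a null set, and there the infimum
  defining the quantile function is the junk value \<open>Inf {}\<close>.\<close>

definition is_quantile_fun :: "(real \<Rightarrow> real) \<Rightarrow> (real \<Rightarrow> real) \<Rightarrow> bool" where
  "is_quantile_fun F Q \<longleftrightarrow>
     (\<forall>u\<in>{0..<1}. (\<forall>r. Q u \<le> r \<longrightarrow> u \<le> F r) \<and> (\<forall>t. t < Q u \<longrightarrow> F t \<le> u))"

lemma nn_integral_cdf_gap_le_coupling:
  fixes X Y :: "'w \<Rightarrow> real" and \<Phi> :: "'z \<Rightarrow> ennreal"
  assumes "prob_space P" and [measurable]: "X \<in> borel_measurable P" "Y \<in> borel_measurable P"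
    and "sigma_finite_measure L"
    and [measurable]: "\<Phi> \<in> borel_measurable L" "\<rho> \<in> borel_measurable L" "\<tau> \<in> borel_measurable L"
  shows "(\<integral>\<^sup>+z. \<Phi> z * ennreal (cdf (distr P borel Y) (\<rho> z) - cdf (distr P borel X) (\<tau> z)) \<partial>L)
     \<le> (\<integral>\<^sup>+\<omega>. (\<integral>\<^sup>+z. \<Phi> z * indicator {z. Y \<omega> \<le> \<rho> z \<and> \<tau> z < X \<omega>} z \<partial>L) \<partial>P)"
proof -
  interpret P: prob_space P by fact
  interpret pair_sigma_finite P L
    using \<open>sigma_finite_measure L\<close> by (simp add: pair_sigma_finite_def P.sigma_finite_measure_axioms)
  have "cdf (distr P borel Y) r - cdf (distr P borel X) t
      \<le> measure P {\<omega>\<in>space P. Y \<omega> \<le> r \<and> t < X \<omega>}" for r t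
  proof -
    have "measure P {\<omega>\<in>space P. Y \<omega> \<le> r}
        \<le> measure P ({\<omega>\<in>space P. Y \<omega> \<le> r \<and> t < X \<omega>} \<union> {\<omega>\<in>space P. X \<omega> \<le> t})"
      by (intro P.finite_measure_mono) auto
    also have "\<dots> \<le> measure P {\<omega>\<in>space P. Y \<omega> \<le> r \<and> t < X \<omega>} + measure P {\<omega>\<in>space P. X \<omega> \<le> t}"
      by (intro measure_subadditive) (auto simp: P.emeasure_eq_measure)
    finally show ?thesis by (simp add: cdf_distr)
  qed
  then have "(\<integral>\<^sup>+z. \<Phi> z * ennreal (cdf (distr P borel Y) (\<rho> z) - cdf (distr P borel X) (\<tau> z)) \<partial>L)
      \<le> (\<integral>\<^sup>+z. \<Phi> z * emeasure P {\<omega>\<in>space P. Y \<omega> \<le> \<rho> z \<and> \<tau> z < X \<omega>} \<partial>L)"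
    by (intro nn_integral_mono mult_left_mono) (auto simp: P.emeasure_eq_measure ennreal_leI)
  also have "\<dots> = (\<integral>\<^sup>+z. (\<integral>\<^sup>+\<omega>. \<Phi> z * indicator {z. Y \<omega> \<le> \<rho> z \<and> \<tau> z < X \<omega>} z \<partial>P) \<partial>L)"
    by (intro nn_integral_cong) (auto simp: nn_integral_cmult_indicator[symmetric] intro!: nn_integral_cong split: split_indicator)
  also have "\<dots> = (\<integral>\<^sup>+\<omega>. (\<integral>\<^sup>+z. \<Phi> z * indicator {z. Y \<omega> \<le> \<rho> z \<and> \<tau> z < X \<omega>} z \<partial>L) \<partial>P)"
    by (intro Fubini') measurable
  finally show ?thesis .
qed

lemma nn_integral_quantile_gap_le_cdf_gap:
  fixes Q1 Q2 F G :: "real \<Rightarrow> real" and \<Phi> :: "'z \<Rightarrow> ennreal"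
  assumes [measurable]: "Q1 \<in> borel_measurable borel" "Q2 \<in> borel_measurable borel"
    and "sigma_finite_measure L"
    and [measurable]: "\<Phi> \<in> borel_measurable L" "\<rho> \<in> borel_measurable L" "\<tau> \<in> borel_measurable L"
    and Q1: "is_quantile_fun F Q1" and Q2: "is_quantile_fun G Q2"
  shows "(\<integral>\<^sup>+u. (\<integral>\<^sup>+z. \<Phi> z * indicator {z. u \<in> {0..1} \<and> Q2 u \<le> \<rho> z \<and> \<tau> z < Q1 u} z \<partial>L) \<partial>lborel)
     \<le> (\<integral>\<^sup>+z. \<Phi> z * ennreal (G (\<rho> z) - F (\<tau> z)) \<partial>L)"
proof -
  interpret pair_sigma_finite lborel L
    using \<open>sigma_finite_measure L\<close> by (simp add: pair_sigma_finite_def lborel.sigma_finite_measure_axioms)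
  have emeasure_quantile_set:
    "emeasure lborel {u. u \<in> {0..1} \<and> Q2 u \<le> r \<and> t < Q1 u} \<le> ennreal (G r - F t)" for r t
  proof -
    have "{u. u \<in> {0..1} \<and> Q2 u \<le> r \<and> t < Q1 u} \<subseteq> {F t..G r} \<union> {1}"
      using Q1 Q2 by (fastforce simp: is_quantile_fun_def)
    then have "emeasure lborel {u. u \<in> {0..1} \<and> Q2 u \<le> r \<and> t < Q1 u} \<le> emeasure lborel ({F t..G r} \<union> {1})"
      by (intro emeasure_mono) auto
    also have "\<dots> \<le> emeasure lborel {F t..G r} + emeasure lborel {1::real}"
      by (intro emeasure_subadditive) auto
    finally show ?thesis
      by (simp add: emeasure_lborel_Icc_eq ennreal_neg split: if_splits)
  qed
  have "(\<integral>\<^sup>+z. (\<integral>\<^sup>+u. \<Phi> z * indicator {z. u \<in> {0..1} \<and> Q2 u \<le> \<rho> z \<and> \<tau> z < Q1 u} z \<partial>lborel) \<partial>L)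
      \<le> (\<integral>\<^sup>+z. \<Phi> z * ennreal (G (\<rho> z) - F (\<tau> z)) \<partial>L)"
  proof (intro nn_integral_mono)
    fix z
    define A where "A = {u. u \<in> {0..1} \<and> Q2 u \<le> \<rho> z \<and> \<tau> z < Q1 u}"
    have "{u \<in> space borel. u \<in> {0..1} \<and> Q2 u \<le> \<rho> z \<and> \<tau> z < Q1 u} \<in> sets borel"
      by measurable
    then have "A \<in> sets lborel" by (simp add: A_def)
    then have "(\<integral>\<^sup>+u. \<Phi> z * indicator {z. u \<in> {0..1} \<and> Q2 u \<le> \<rho> z \<and> \<tau> z < Q1 u} z \<partial>lborel)
        = \<Phi> z * emeasure lborel A"
      by (simp add: nn_integral_cmult_indicator[symmetric] A_def indicator_def)
    also have "\<dots> \<le> \<Phi> z * ennreal (G (\<rho> z) - F (\<tau> z))"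
      using emeasure_quantile_set by (simp add: A_def mult_left_mono)
    finally show "(\<integral>\<^sup>+u. \<Phi> z * indicator {z. u \<in> {0..1} \<and> Q2 u \<le> \<rho> z \<and> \<tau> z < Q1 u} z \<partial>lborel)
        \<le> \<Phi> z * ennreal (G (\<rho> z) - F (\<tau> z))" .
  qed
  moreover have "(\<lambda>(u, z). \<Phi> z * indicator {z. u \<in> {0..1} \<and> Q2 u \<le> \<rho> z \<and> \<tau> z < Q1 u} z)
      \<in> borel_measurable (lborel \<Otimes>\<^sub>M L)"
    by measurable
  ultimately show ?thesis
    by (simp add: Fubini')
qed

lemma nn_integral_quantile_kernel_le_coupling:
  fixes X Y :: "'w \<Rightarrow> real" and Q1 Q2 :: "real \<Rightarrow> real" and \<Phi> :: "'z \<Rightarrow> ennreal"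
  assumes "prob_space P" and [measurable]: "X \<in> borel_measurable P" "Y \<in> borel_measurable P"
    and [measurable]: "Q1 \<in> borel_measurable borel" "Q2 \<in> borel_measurable borel"
    and "is_quantile_fun (cdf (distr P borel X)) Q1" "is_quantile_fun (cdf (distr P borel Y)) Q2"
    and "sigma_finite_measure L"
    and [measurable]: "\<Phi> \<in> borel_measurable L" "\<rho> \<in> borel_measurable L" "\<tau> \<in> borel_measurable L"
  shows "(\<integral>\<^sup>+u. (\<integral>\<^sup>+z. \<Phi> z * indicator {z. Q2 u \<le> \<rho> z \<and> \<tau> z < Q1 u} z \<partial>L) * indicator {0..1} u \<partial>lborel)
     \<le> (\<integral>\<^sup>+\<omega>. (\<integral>\<^sup>+z. \<Phi> z * indicator {z. Y \<omega> \<le> \<rho> z \<and> \<tau> z < X \<omega>} z \<partial>L) \<partial>P)"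
proof -
  have "(\<integral>\<^sup>+z. \<Phi> z * indicator {z. Q2 u \<le> \<rho> z \<and> \<tau> z < Q1 u} z \<partial>L) * indicator {0..1} u
      = (\<integral>\<^sup>+z. \<Phi> z * indicator {z. u \<in> {0..1} \<and> Q2 u \<le> \<rho> z \<and> \<tau> z < Q1 u} z \<partial>L)" for u
    by (cases "u \<in> {0..1}") auto
  then have "(\<integral>\<^sup>+u. (\<integral>\<^sup>+z. \<Phi> z * indicator {z. Q2 u \<le> \<rho> z \<and> \<tau> z < Q1 u} z \<partial>L) * indicator {0..1} u \<partial>lborel)
      = (\<integral>\<^sup>+u. (\<integral>\<^sup>+z. \<Phi> z * indicator {z. u \<in> {0..1} \<and> Q2 u \<le> \<rho> z \<and> \<tau> z < Q1 u} z \<partial>L) \<partial>lborel)"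
    by simp
  also have "\<dots> \<le> (\<integral>\<^sup>+z. \<Phi> z * ennreal (cdf (distr P borel Y) (\<rho> z) - cdf (distr P borel X) (\<tau> z)) \<partial>L)"
    using assms by (intro nn_integral_quantile_gap_le_cdf_gap) simp_all
  also have "\<dots> \<le> (\<integral>\<^sup>+\<omega>. (\<integral>\<^sup>+z. \<Phi> z * indicator {z. Y \<omega> \<le> \<rho> z \<and> \<tau> z < X \<omega>} z \<partial>L) \<partial>P)"
    using assms by (intro nn_integral_cdf_gap_le_coupling) simp_all
  finally show ?thesis .
qed

lemma ennreal_abs_powr_split:
  fixes a b p :: real
  shows "ennreal (\<bar>a - b\<bar> powr p) = ennreal (max 0 (a - b) powr p) + ennreal (max 0 (b - a) powr p)"
  by (cases "a \<le> b") (auto simp: max_def)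

lemma nn_integral_quantile_diff_powr_le_coupling_kernel:
  fixes X Y :: "'w \<Rightarrow> real" and Q1 Q2 :: "real \<Rightarrow> real" and \<Phi> :: "'z \<Rightarrow> ennreal"
  assumes "prob_space P" and [measurable]: "X \<in> borel_measurable P" "Y \<in> borel_measurable P"
    and [measurable]: "Q1 \<in> borel_measurable borel" "Q2 \<in> borel_measurable borel"
    and "is_quantile_fun (cdf (distr P borel X)) Q1" "is_quantile_fun (cdf (distr P borel Y)) Q2"
    and "sigma_finite_measure L"
    and [measurable]: "\<Phi> \<in> borel_measurable L" "\<rho> \<in> borel_measurable L" "\<tau> \<in> borel_measurable L"
    and kernel: "\<And>x y. ennreal (max 0 (x - y) powr p) = (\<integral>\<^sup>+z. \<Phi> z * indicator {z. y \<le> \<rho> z \<and> \<tau> z < x} z \<partial>L)"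
  shows "(\<integral>\<^sup>+u. ennreal (\<bar>Q1 u - Q2 u\<bar> powr p) * indicator {0..1} u \<partial>lborel)
      \<le> (\<integral>\<^sup>+\<omega>. ennreal (\<bar>X \<omega> - Y \<omega>\<bar> powr p) \<partial>P)"
proof -
  have "(\<integral>\<^sup>+u. ennreal (\<bar>Q1 u - Q2 u\<bar> powr p) * indicator {0..1} u \<partial>lborel)
     = (\<integral>\<^sup>+u. ennreal (max 0 (Q1 u - Q2 u) powr p) * indicator {0..1} u \<partial>lborel)
      + (\<integral>\<^sup>+u. ennreal (max 0 (Q2 u - Q1 u) powr p) * indicator {0..1} u \<partial>lborel)"
    by (simp add: ennreal_abs_powr_split distrib_right nn_integral_add)
  also have "\<dots> \<le> (\<integral>\<^sup>+\<omega>. ennreal (max 0 (X \<omega> - Y \<omega>) powr p) \<partial>P)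
      + (\<integral>\<^sup>+\<omega>. ennreal (max 0 (Y \<omega> - X \<omega>) powr p) \<partial>P)"
    unfolding kernel using assms
    by (intro add_mono nn_integral_quantile_kernel_le_coupling) simp_all
  also have "\<dots> = (\<integral>\<^sup>+\<omega>. ennreal (\<bar>X \<omega> - Y \<omega>\<bar> powr p) \<partial>P)"
    by (simp add: ennreal_abs_powr_split nn_integral_add)
  finally show ?thesis .
qed

lemma nn_integral_quantile_diff_powr_le_coupling:
  fixes X Y :: "'w \<Rightarrow> real" and Q1 Q2 :: "real \<Rightarrow> real" and p :: real
  assumes "1 \<le> p"
    and "prob_space P" and [measurable]: "X \<in> borel_measurable P" "Y \<in> borel_measurable P"
    and [measurable]: "Q1 \<in> borel_measurable borel" "Q2 \<in> borel_measurable borel"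
    and "is_quantile_fun (cdf (distr P borel X)) Q1" "is_quantile_fun (cdf (distr P borel Y)) Q2"
  shows "(\<integral>\<^sup>+u. ennreal (\<bar>Q1 u - Q2 u\<bar> powr p) * indicator {0..1} u \<partial>lborel)
      \<le> (\<integral>\<^sup>+\<omega>. ennreal (\<bar>X \<omega> - Y \<omega>\<bar> powr p) \<partial>P)"
proof (cases "p = 1")
  case True
  have "ennreal (max 0 (x - y) powr 1) = ennreal (x - y)" for x y :: real
    by (cases "y \<le> x") (simp_all add: ennreal_neg)
  with True show ?thesis
    using assms ennreal_diff_eq_nn_integral_indicator lborel.sigma_finite_measure_axioms
    by (intro nn_integral_quantile_diff_powr_le_coupling_kernel[where L=lborel and \<Phi>="\<lambda>_. 1" and \<rho>="\<lambda>t. t" and \<tau>="\<lambda>t. t"])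
      simp_all
next
  case False
  then show ?thesis
    using assms pos_part_powr_eq_nn_integral_power_kernel
      sigma_finite_pair_measure[OF lborel.sigma_finite_measure_axioms lborel.sigma_finite_measure_axioms]
    by (intro nn_integral_quantile_diff_powr_le_coupling_kernel[where L="lborel \<Otimes>\<^sub>M lborel" and \<rho>=fst and \<tau>=snd])
      simp_all
qed

lemma ennreal_abs_diff_split:
  fixes a b :: real
  shows "ennreal \<bar>a - b\<bar> = ennreal (a - b) + ennreal (b - a)"
  by (cases "a \<le> b") (simp_all add: ennreal_neg)

lemma nn_integral_cdf_diff_le_coupling:
  fixes X Y :: "'w \<Rightarrow> real"
  assumes "prob_space P" and [measurable]: "X \<in> borel_measurable P" "Y \<in> borel_measurable P"
  shows "(\<integral>\<^sup>+t. ennreal \<bar>cdf (distr P borel X) t - cdf (distr P borel Y) t\<bar> \<partial>lborel)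
      \<le> (\<integral>\<^sup>+\<omega>. ennreal \<bar>X \<omega> - Y \<omega>\<bar> \<partial>P)"
proof -
  interpret prob_space P by fact
  have [measurable]: "cdf (distr P borel X) \<in> borel_measurable borel" "cdf (distr P borel Y) \<in> borel_measurable borel"
    by (simp_all add: borel_measurable_cdf real_distribution.finite_borel_measure_M)
  have gap: "(\<integral>\<^sup>+t. ennreal (cdf (distr P borel Y) t - cdf (distr P borel X) t) \<partial>lborel)
      \<le> (\<integral>\<^sup>+\<omega>. ennreal (X \<omega> - Y \<omega>) \<partial>P)"
    if [measurable]: "X \<in> borel_measurable P" "Y \<in> borel_measurable P" for X Y
    using nn_integral_cdf_gap_le_coupling[where L=lborel and \<Phi>="\<lambda>_. 1" and \<rho>="\<lambda>t. t" and \<tau>="\<lambda>t. t",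
        OF prob_space_axioms that lborel.sigma_finite_measure_axioms]
    by (simp only: ennreal_diff_eq_nn_integral_indicator mult_1) simp
  have "(\<integral>\<^sup>+t. ennreal \<bar>cdf (distr P borel X) t - cdf (distr P borel Y) t\<bar> \<partial>lborel)
      = (\<integral>\<^sup>+t. ennreal (cdf (distr P borel Y) t - cdf (distr P borel X) t) \<partial>lborel)
        + (\<integral>\<^sup>+t. ennreal (cdf (distr P borel X) t - cdf (distr P borel Y) t) \<partial>lborel)"
    by (simp add: ennreal_abs_diff_split nn_integral_add add.commute)
  also have "\<dots> \<le> (\<integral>\<^sup>+\<omega>. ennreal (X \<omega> - Y \<omega>) \<partial>P) + (\<integral>\<^sup>+\<omega>. ennreal (Y \<omega> - X \<omega>) \<partial>P)"
    by (intro add_mono gap) simp_all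
  also have "\<dots> = (\<integral>\<^sup>+\<omega>. ennreal \<bar>X \<omega> - Y \<omega>\<bar> \<partial>P)"
    by (simp add: ennreal_abs_diff_split nn_integral_add)
  finally show ?thesis .
qed

lemma is_quantile_fun_cdf:
  assumes "real_distribution \<mu>" and nonneg: "\<And>t. t < 0 \<Longrightarrow> cdf \<mu> t = 0"
    and "0 \<le> D" "cdf \<mu> D = 1"
  shows "is_quantile_fun (cdf \<mu>) (\<lambda>u. Inf {r. 0 \<le> r \<and> u < cdf \<mu> r})"
  unfolding is_quantile_fun_def
proof (intro ballI conjI allI impI)
  interpret real_distribution \<mu> by fact
  fix u :: real assume u: "u \<in> {0..<1}"
  define S where "S = {r. 0 \<le> r \<and> u < cdf \<mu> r}"
  have "D \<in> S" using u assms by (simp add: S_def)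
  have "bdd_below S" by (auto simp: S_def)
  show "u \<le> cdf \<mu> r" if "Inf S \<le> r" for r
  proof (rule ccontr)
    assume "\<not> u \<le> cdf \<mu> r"
    then have "eventually (\<lambda>s. cdf \<mu> s < u) (at_right r)"
      using cdf_is_right_cont[of r] by (intro order_tendstoD) (auto simp: continuous_within)
    then obtain e where "r < e" and e: "\<And>s. r < s \<Longrightarrow> s < e \<Longrightarrow> cdf \<mu> s < u"
      by (auto simp: eventually_at_right_field)
    have "(r + e) / 2 \<le> Inf S"
    proof (rule cInf_greatest)
      show "S \<noteq> {}" using \<open>D \<in> S\<close> by auto
      show "(r + e) / 2 \<le> s" if "s \<in> S" for s
      proof (rule ccontr)
        assume "\<not> (r + e) / 2 \<le> s"
        then have "cdf \<mu> s \<le> cdf \<mu> ((r + e) / 2)" by (intro cdf_nondecreasing) simp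
        with e[of "(r + e) / 2"] \<open>r < e\<close> \<open>s \<in> S\<close> show False by (auto simp: S_def)
      qed
    qed
    with that \<open>r < e\<close> show False by simp
  qed
  show "cdf \<mu> t \<le> u" if "t < Inf S" for t
  proof (rule ccontr)
    assume "\<not> cdf \<mu> t \<le> u"
    moreover have "0 \<le> t"
      using nonneg[of t] u \<open>\<not> cdf \<mu> t \<le> u\<close> by (cases "t < 0") auto
    ultimately have "t \<in> S" by (simp add: S_def)
    with \<open>bdd_below S\<close> that show False by (auto dest: cInf_lower)
  qed
qed

lemma borel_measurable_quantile_cdf:
  assumes "real_distribution \<mu>" "0 \<le> D" "cdf \<mu> D = 1"
  shows "(\<lambda>u. Inf {r. 0 \<le> r \<and> u < cdf \<mu> r}) \<in> borel_measurable borel"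
proof (rule borel_measurable_piecewise_mono[of "{{..<1}, {1..}}"])
  interpret real_distribution \<mu> by fact
  have "mono_on {..<1} (\<lambda>u. Inf {r. 0 \<le> r \<and> u < cdf \<mu> r})"
  proof (rule mono_onI)
    fix u v :: real assume "v \<in> {..<1}" "u \<le> v"
    moreover have "D \<in> {r. 0 \<le> r \<and> v < cdf \<mu> r}"
      using \<open>v \<in> {..<1}\<close> assms by simp
    ultimately show "Inf {r. 0 \<le> r \<and> u < cdf \<mu> r} \<le> Inf {r. 0 \<le> r \<and> v < cdf \<mu> r}"
      by (intro cInf_superset_mono) (auto simp: bdd_below_def)
  qed
  moreover have empty: "{r. 0 \<le> r \<and> u < cdf \<mu> r} = {}" if "1 \<le> u" for u
    using cdf_bounded_prob that by (auto simp: not_less intro: order.trans)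
  then have "mono_on {1..} (\<lambda>u. Inf {r. 0 \<le> r \<and> u < cdf \<mu> r})"
    by (intro mono_onI) (simp add: empty)
  ultimately show "\<And>c. c \<in> {{..<1}, {1..}} \<Longrightarrow> mono_on c (\<lambda>u. Inf {r. 0 \<le> r \<and> u < cdf \<mu> r})"
    by auto
qed auto

lemma set_integral_le_if_nn_integral_le:
  fixes f :: "real \<Rightarrow> real"
  assumes nonneg: "\<And>x. x \<in> A \<Longrightarrow> 0 \<le> f x"
    and le: "(\<integral>\<^sup>+x. ennreal (f x) * indicator A x \<partial>lborel) \<le> ennreal c" and "0 \<le> c"
  shows "(\<integral>x\<in>A. f x \<partial>lborel) \<le> c"
proof (cases "integrable lborel (\<lambda>x. indicator A x *\<^sub>R f x)")
  case True
  have "ennreal (\<integral>x. indicator A x *\<^sub>R f x \<partial>lborel) = (\<integral>\<^sup>+x. ennreal (indicator A x *\<^sub>R f x) \<partial>lborel)"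
    using True nonneg by (intro nn_integral_eq_integral[symmetric]) (auto split: split_indicator)
  also have "\<dots> = (\<integral>\<^sup>+x. ennreal (f x) * indicator A x \<partial>lborel)"
    by (intro nn_integral_cong) (auto split: split_indicator)
  finally have "ennreal (\<integral>x. indicator A x *\<^sub>R f x \<partial>lborel) \<le> ennreal c"
    using le by simp
  then show ?thesis
    using \<open>0 \<le> c\<close> unfolding set_lebesgue_integral_def by (simp add: ennreal_le_iff)
next
  case False
  then show ?thesis
    using \<open>0 \<le> c\<close> by (simp add: set_lebesgue_integral_def not_integrable_integral_eq)
qed

lemma weighted_AM_GM_powr:
  fixes q t b :: real
  assumes "0 < q" "q \<le> 1" "0 \<le> t" "0 < b"
  shows "t powr q * b powr (1 - q) \<le> q * t + (1 - q) * b"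
  using assms Youngs_inequality_0[of q "1 - q" t b] by (cases "t = 0") simp_all

lemma (in finite_measure) integrable_powr:
  fixes J :: "'a \<Rightarrow> real"
  assumes J: "integrable M J" and J_nonneg: "\<And>x. x \<in> space M \<Longrightarrow> 0 \<le> J x"
    and q: "0 < q" "q \<le> 1"
  shows "integrable M (\<lambda>x. J x powr q)"
proof (rule Bochner_Integration.integrable_bound)
  show "integrable M (\<lambda>x. q * J x + (1 - q) * 1)"
    using J by simp
  show "AE x in M. norm (J x powr q) \<le> norm (q * J x + (1 - q) * 1)"
    using weighted_AM_GM_powr[OF q J_nonneg, of _ 1] q J_nonneg by (intro AE_I2) simp
  show "(\<lambda>x. J x powr q) \<in> borel_measurable M"
    using borel_measurable_integrable[OF J] by measurable
qed

lemma (in prob_space) integral_powr_le_powr_integral: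
  fixes J :: "'a \<Rightarrow> real"
  assumes J: "integrable M J" and J_nonneg: "\<And>x. x \<in> space M \<Longrightarrow> 0 \<le> J x"
    and q: "0 < q" "q \<le> 1"
  shows "(\<integral>x. J x powr q \<partial>M) \<le> (\<integral>x. J x \<partial>M) powr q"
proof -
  define a where "a = (\<integral>x. J x \<partial>M)"
  have [measurable]: "J \<in> borel_measurable M"
    using J by (rule borel_measurable_integrable)
  have "a \<ge> 0"
    unfolding a_def using J_nonneg by (intro integral_nonneg_AE AE_I2) auto
  then consider "a = 0" | "a > 0" by linarith
  then show ?thesis
  proof cases
    case 1
    then have "AE x in M. J x = 0"
      using integral_nonneg_eq_0_iff_AE[OF J] J_nonneg by (auto simp: a_def intro: AE_I2)
    then have "(\<integral>x. J x powr q \<partial>M) = (\<integral>x. 0 \<partial>M)"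
      by (intro integral_cong_AE) (auto elim: AE_mp)
    with 1 show ?thesis by (simp add: a_def)
  next
    case 2
    have "(\<integral>x. J x powr q \<partial>M) * a powr (1 - q) = (\<integral>x. J x powr q * a powr (1 - q) \<partial>M)"
      by simp
    also have "\<dots> \<le> (\<integral>x. q * J x + (1 - q) * a \<partial>M)"
      using integrable_powr[OF J J_nonneg q] J J_nonneg q 2 weighted_AM_GM_powr
      by (intro integral_mono) auto
    also have "\<dots> = a powr q * a powr (1 - q)"
      using J 2 by (simp add: a_def prob_space powr_add[symmetric] algebra_simps)
    finally show ?thesis
      using 2 by (simp add: a_def)
  qed
qed

lemma (in pair_sigma_finite) integral_fst_powr_le:
  fixes f :: "'a \<times> 'b \<Rightarrow> real"
  assumes "prob_space M1" "integrable (M1 \<Otimes>\<^sub>M M2) f"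
    and "\<And>z. z \<in> space (M1 \<Otimes>\<^sub>M M2) \<Longrightarrow> 0 \<le> f z" and "1 \<le> p"
  shows "(\<integral>x. (\<integral>y. f (x, y) \<partial>M2) powr (1 / p) \<partial>M1) \<le> (integral\<^sup>L (M1 \<Otimes>\<^sub>M M2) f) powr (1 / p)"
proof -
  have "(\<integral>x. (\<integral>y. f (x, y) \<partial>M2) powr (1 / p) \<partial>M1) \<le> (\<integral>x. (\<integral>y. f (x, y) \<partial>M2) \<partial>M1) powr (1 / p)"
  proof (rule prob_space.integral_powr_le_powr_integral[OF \<open>prob_space M1\<close>])
    show "integrable M1 (\<lambda>x. \<integral>y. f (x, y) \<partial>M2)"
      using assms(2) by (rule integrable_fst')
    show "0 \<le> (\<integral>y. f (x, y) \<partial>M2)" if "x \<in> space M1" for x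
      using assms(3) that by (intro integral_nonneg_AE AE_I2) (simp add: space_pair_measure)
  qed (use \<open>1 \<le> p\<close> in simp_all)
  then show ?thesis
    using assms(2) by (simp add: integral_fst')
qed

text \<open>The Borel sets of a product need not be generated by products of Borel sets, so the
  distance is approximated by minima over finite nets of the compact space.\<close>

lemma borel_measurable_dist_pair:
  assumes "compact (space N)" and dist_meas[measurable]: "\<And>y. dist y \<in> borel_measurable N"
  shows "(\<lambda>z. dist (fst z) (snd z)) \<in> borel_measurable (N \<Otimes>\<^sub>M N)"
proof -
  obtain K where K: "\<And>e. e > 0 \<Longrightarrow> finite (K e) \<and> K e \<subseteq> space N \<and> space N \<subseteq> (\<Union>t\<in>K e. ball t e)"
    using seq_compact_imp_totally_bounded[OF compact_imp_seq_compact[OF assms(1)]] by metis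
  define e where "e n = 1 / (real n + 1)" for n :: nat
  define h where "h n z = Min ((\<lambda>t. dist (fst z) t + dist t (snd z)) ` K (e n))" for n z
  have e_pos: "e n > 0" for n by (simp add: e_def)
  have [measurable]: "(\<lambda>x. dist x t) \<in> borel_measurable N" for t
    using dist_meas[of t] by (simp add: dist_commute[of _ t])
  have "h n \<in> borel_measurable (N \<Otimes>\<^sub>M N)" for n
    unfolding h_def using K[OF e_pos] by (intro borel_measurable_Min) measurable
  moreover have "(\<lambda>n. h n z) \<longlonglongrightarrow> dist (fst z) (snd z)" if "z \<in> space (N \<Otimes>\<^sub>M N)" for z
  proof (rule tendsto_sandwich)
    have "snd z \<in> space N"
      using that by (auto simp: space_pair_measure)
    then have net: "finite (K (e n))" "\<exists>t\<in>K (e n). dist t (snd z) < e n" for n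
      using K[OF e_pos[of n]] by (auto simp: subset_eq)
    show "eventually (\<lambda>n. dist (fst z) (snd z) \<le> h n z) sequentially"
    proof (intro always_eventually allI)
      fix n
      show "dist (fst z) (snd z) \<le> h n z"
        unfolding h_def using net[of n] by (subst Min_ge_iff) (auto intro: dist_triangle)
    qed
    show "eventually (\<lambda>n. h n z \<le> dist (fst z) (snd z) + 2 * e n) sequentially"
    proof (intro always_eventually allI)
      fix n
      obtain t where t: "t \<in> K (e n)" "dist t (snd z) < e n"
        using net(2) by blast
      have "h n z \<le> dist (fst z) t + dist t (snd z)"
        unfolding h_def using net(1) t(1) by (intro Min_le) auto
      also have "\<dots> \<le> dist (fst z) (snd z) + 2 * e n"
        using dist_triangle[of "fst z" t "snd z"] t(2) by (simp add: dist_commute)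
      finally show "h n z \<le> dist (fst z) (snd z) + 2 * e n" .
    qed
    show "(\<lambda>n. dist (fst z) (snd z) + 2 * e n) \<longlonglongrightarrow> dist (fst z) (snd z)"
      unfolding e_def by real_asymp
  qed simp
  ultimately show ?thesis
    by (rule borel_measurable_LIMSEQ_real[rotated])
qed

lemma mm_space_prob_space: "mm_space N \<Longrightarrow> prob_space N"
  by (simp add: mm_space_def)

lemma mm_space_compact: "mm_space N \<Longrightarrow> compact (space N)"
  by (simp add: mm_space_def)

lemma borel_measurable_mm_space_continuous:
  assumes "mm_space N" "continuous_on (space N) f"
  shows "f \<in> borel_measurable N"
  using borel_measurable_continuous_on_restrict[OF assms(2)] assms(1)
  by (simp add: mm_space_def cong: measurable_cong_sets)

lemma dist_le_diameter_mm_space: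
  assumes "mm_space N" "x \<in> space N" "y \<in> space N"
  shows "dist x y \<le> diameter (space N)"
  using assms by (intro diameter_bounded_bound) (simp_all add: mm_space_def compact_imp_bounded)

lemma borel_measurable_dist_mm_space[measurable]:
  "mm_space N \<Longrightarrow> dist y \<in> borel_measurable N"
  by (intro borel_measurable_mm_space_continuous continuous_intros)

lemma ldd_eq_cdf:
  assumes "mm_space N"
  shows "ldd N y = cdf (distr N borel (dist y))"
proof
  fix t
  have "cball y t \<inter> space N = {\<omega>\<in>space N. dist y \<omega> \<le> t}" by auto
  then show "ldd N y t = cdf (distr N borel (dist y)) t"
    using assms by (simp add: ldd_def cdf_distr)
qed

lemma measurable_transport_map: "\<phi> \<in> transport_maps M N \<Longrightarrow> \<phi> \<in> M \<rightarrow>\<^sub>M N"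
  by (simp add: transport_maps_def)

lemma ldd_eq_cdf_transport:
  assumes "mm_space N" "\<phi> \<in> transport_maps M N"
  shows "ldd N y = cdf (distr M borel (\<lambda>\<omega>. dist y (\<phi> \<omega>)))"
proof -
  have "distr M N \<phi> = N"
    using assms(2) by (simp add: transport_maps_def)
  with measurable_transport_map[OF assms(2)] have "distr M borel (\<lambda>\<omega>. dist y (\<phi> \<omega>)) = distr N borel (dist y)"
    using distr_distr[OF borel_measurable_dist_mm_space[OF assms(1)], of \<phi> M] by (simp add: comp_def)
  then show ?thesis
    using assms by (simp add: ldd_eq_cdf)
qed

lemma
  assumes "mm_space N" "y \<in> space N"
  shows is_quantile_fun_ldd_inv: "is_quantile_fun (ldd N y) (ldd_inv N y)"
    and borel_measurable_ldd_inv: "ldd_inv N y \<in> borel_measurable borel"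
proof -
  interpret prob_space N using assms by (simp add: mm_space_prob_space)
  let ?\<mu> = "distr N borel (dist y)"
  have "real_distribution ?\<mu>"
    using assms by simp
  moreover have "cdf ?\<mu> t = 0" if "t < 0" for t
    using that by (simp add: ldd_eq_cdf[OF assms(1), symmetric] ldd_def)
  moreover have "cball y (diameter (space N)) \<inter> space N = space N"
    using dist_le_diameter_mm_space[OF assms(1,2)] by auto
  then have "cdf ?\<mu> (diameter (space N)) = 1"
    by (simp add: ldd_eq_cdf[OF assms(1), symmetric] ldd_def prob_space)
  moreover have "0 \<le> diameter (space N)"
    using dist_le_diameter_mm_space[OF assms(1,2,2)] by simp
  ultimately show "is_quantile_fun (ldd N y) (ldd_inv N y)" "ldd_inv N y \<in> borel_measurable borel"
    unfolding ldd_inv_def[abs_def] ldd_eq_cdf[OF assms(1)]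
    by (blast intro: is_quantile_fun_cdf borel_measurable_quantile_cdf)+
qed

definition distortion :: "('a::metric_space \<Rightarrow> 'b::metric_space) \<Rightarrow> 'a \<Rightarrow> 'a \<Rightarrow> real" where
  "distortion \<phi> x x' = \<bar>dist x x' - dist (\<phi> x) (\<phi> x')\<bar>"

context
  fixes M :: "'a::metric_space measure" and N :: "'b::metric_space measure" and \<phi> :: "'a \<Rightarrow> 'b"
  assumes M: "mm_space M" and N: "mm_space N" and \<phi>[measurable]: "\<phi> \<in> M \<rightarrow>\<^sub>M N"
begin

lemma distortion_le_diameters:
  assumes "x \<in> space M" "x' \<in> space M"
  shows "distortion \<phi> x x' \<le> diameter (space M) + diameter (space N)"
proof -
  have "\<phi> x \<in> space N" "\<phi> x' \<in> space N"
    using measurable_space[OF \<phi>] assms by auto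
  then show ?thesis
    unfolding distortion_def abs_le_iff
    using dist_le_diameter_mm_space[OF M assms] dist_le_diameter_mm_space[OF N, of "\<phi> x" "\<phi> x'"]
      zero_le_dist[of x x'] zero_le_dist[of "\<phi> x" "\<phi> x'"]
    by (intro conjI) linarith+
qed

lemma borel_measurable_distortion[measurable]:
  "(\<lambda>z. distortion \<phi> (fst z) (snd z)) \<in> borel_measurable (M \<Otimes>\<^sub>M M)"
proof -
  have dist_M: "(\<lambda>z. dist (fst z) (snd z)) \<in> borel_measurable (M \<Otimes>\<^sub>M M)"
    using M by (intro borel_measurable_dist_pair mm_space_compact borel_measurable_dist_mm_space)
  have dist_N: "(\<lambda>z. dist (fst z) (snd z)) \<in> borel_measurable (N \<Otimes>\<^sub>M N)"
    using N by (intro borel_measurable_dist_pair mm_space_compact borel_measurable_dist_mm_space)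
  have "(\<lambda>z. dist (\<phi> (fst z)) (\<phi> (snd z))) \<in> borel_measurable (M \<Otimes>\<^sub>M M)"
    using measurable_compose[OF measurable_Pair[OF measurable_compose[OF measurable_fst \<phi>]
        measurable_compose[OF measurable_snd \<phi>]] dist_N]
    by simp
  with dist_M show ?thesis
    unfolding distortion_def by (intro borel_measurable_abs borel_measurable_diff)
qed

lemma
  assumes "0 \<le> p"
  shows integrable_distortion_powr: "integrable (M \<Otimes>\<^sub>M M) (\<lambda>z. distortion \<phi> (fst z) (snd z) powr p)"
    and integrable_distortion_powr_section:
      "x \<in> space M \<Longrightarrow> integrable M (\<lambda>x'. distortion \<phi> x x' powr p)"
proof -
  interpret M: prob_space M
    using M by (rule mm_space_prob_space)
  interpret pair_prob_space M M ..
  have "finite_measure (M \<Otimes>\<^sub>M M)" by intro_locales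
  define B where "B = (diameter (space M) + diameter (space N)) powr p"
  have bound: "distortion \<phi> x x' powr p \<le> B" if "x \<in> space M" "x' \<in> space M" for x x'
    unfolding B_def using distortion_le_diameters[OF that] assms
    by (intro powr_mono2) (simp_all add: distortion_def)
  show "integrable (M \<Otimes>\<^sub>M M) (\<lambda>z. distortion \<phi> (fst z) (snd z) powr p)"
  proof (rule finite_measure.integrable_const_bound[where B=B, OF \<open>finite_measure (M \<Otimes>\<^sub>M M)\<close>])
    show "AE z in M \<Otimes>\<^sub>M M. norm (distortion \<phi> (fst z) (snd z) powr p) \<le> B"
      using bound by (intro AE_I2) (simp add: space_pair_measure mem_Times_iff)
  qed measurable
  show "integrable M (\<lambda>x'. distortion \<phi> x x' powr p)" if "x \<in> space M"
  proof (intro M.integrable_const_bound[where B=B] AE_I2)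
    show "(\<lambda>x'. distortion \<phi> x x' powr p) \<in> borel_measurable M"
      using measurable_Pair2[OF borel_measurable_distortion that] by simp
  qed (use bound that in auto)
qed

end

context
  fixes M :: "'a::metric_space measure" and N :: "'b::metric_space measure" and \<phi> :: "'a \<Rightarrow> 'b" and x :: 'a
  assumes M: "mm_space M" and N: "mm_space N" and \<phi>: "\<phi> \<in> transport_maps M N" and x: "x \<in> space M"
begin

lemma borel_measurable_dist_transport: "(\<lambda>x'. dist y (\<phi> x')) \<in> borel_measurable M"
  using measurable_compose[OF measurable_transport_map[OF \<phi>] borel_measurable_dist_mm_space[OF N]] .

lemma ennreal_integral_distortion_powr:
  assumes "0 \<le> p"
  shows "ennreal (\<integral>x'. distortion \<phi> x x' powr p \<partial>M)
    = (\<integral>\<^sup>+x'. ennreal (\<bar>dist x x' - dist (\<phi> x) (\<phi> x')\<bar> powr p) \<partial>M)"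
  using integrable_distortion_powr_section[OF M N measurable_transport_map[OF \<phi>] assms x]
  by (subst nn_integral_eq_integral) (simp_all add: distortion_def)

lemma quantile_distance_le_distortion:
  assumes "1 \<le> p"
  shows "(\<integral>u\<in>{0..1}. \<bar>ldd_inv M x u - ldd_inv N (\<phi> x) u\<bar> powr p \<partial>lborel)
    \<le> (\<integral>x'. distortion \<phi> x x' powr p \<partial>M)"
proof (rule set_integral_le_if_nn_integral_le)
  have "\<phi> x \<in> space N"
    using measurable_space[OF measurable_transport_map[OF \<phi>] x] .
  have "(\<integral>\<^sup>+u. ennreal (\<bar>ldd_inv M x u - ldd_inv N (\<phi> x) u\<bar> powr p) * indicator {0..1} u \<partial>lborel)
      \<le> (\<integral>\<^sup>+x'. ennreal (\<bar>dist x x' - dist (\<phi> x) (\<phi> x')\<bar> powr p) \<partial>M)"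
    by (rule nn_integral_quantile_diff_powr_le_coupling[OF assms mm_space_prob_space[OF M]
          borel_measurable_dist_mm_space[OF M] borel_measurable_dist_transport
          borel_measurable_ldd_inv[OF M x] borel_measurable_ldd_inv[OF N \<open>\<phi> x \<in> space N\<close>]
          is_quantile_fun_ldd_inv[OF M x, unfolded ldd_eq_cdf[OF M]]
          is_quantile_fun_ldd_inv[OF N \<open>\<phi> x \<in> space N\<close>, unfolded ldd_eq_cdf_transport[OF N \<phi>]]])
  then show "(\<integral>\<^sup>+u. ennreal (\<bar>ldd_inv M x u - ldd_inv N (\<phi> x) u\<bar> powr p) * indicator {0..1} u \<partial>lborel)
      \<le> ennreal (\<integral>x'. distortion \<phi> x x' powr p \<partial>M)"
    using assms by (simp add: ennreal_integral_distortion_powr)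
qed (simp_all add: distortion_def Bochner_Integration.integral_nonneg)

lemma cost_le_distortion: "cost M N x (\<phi> x) \<le> (\<integral>x'. distortion \<phi> x x' \<partial>M)"
  unfolding cost_def
proof (rule set_integral_le_if_nn_integral_le)
  have "(\<integral>\<^sup>+t. ennreal \<bar>ldd M x t - ldd N (\<phi> x) t\<bar> * indicator {0..} t \<partial>lborel)
      \<le> (\<integral>\<^sup>+t. ennreal \<bar>ldd M x t - ldd N (\<phi> x) t\<bar> \<partial>lborel)"
    by (intro nn_integral_mono) (simp split: split_indicator)
  also have "\<dots> \<le> (\<integral>\<^sup>+x'. ennreal \<bar>dist x x' - dist (\<phi> x) (\<phi> x')\<bar> \<partial>M)"
    using nn_integral_cdf_diff_le_coupling[OF mm_space_prob_space[OF M]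
        borel_measurable_dist_mm_space[OF M] borel_measurable_dist_transport]
    by (simp only: ldd_eq_cdf[OF M] ldd_eq_cdf_transport[OF N \<phi>])
  also have "\<dots> = ennreal (\<integral>x'. distortion \<phi> x x' \<partial>M)"
    using ennreal_integral_distortion_powr[of 1] by (simp add: distortion_def)
  finally show "(\<integral>\<^sup>+t. ennreal \<bar>ldd M x t - ldd N (\<phi> x) t\<bar> * indicator {0..} t \<partial>lborel)
      \<le> ennreal (\<integral>x'. distortion \<phi> x x' \<partial>M)" .
qed (simp_all add: distortion_def Bochner_Integration.integral_nonneg)

end

lemma INF_integral_le_dGM:
  fixes M :: "'a::metric_space measure" and N :: "'b::metric_space measure"
  assumes M: "mm_space M" and N: "mm_space N" and "1 \<le> p"
    and bound: "\<And>\<phi> x. \<phi> \<in> transport_maps M N \<Longrightarrow> x \<in> space M \<Longrightarrow>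
      A \<phi> x \<le> (\<integral>x'. distortion \<phi> x x' powr p \<partial>M) powr (1 / p)"
  shows "(INF \<phi>\<in>transport_maps M N. ereal (\<integral>x. A \<phi> x \<partial>M)) \<le> dGM p M N"
  unfolding dGM_def
proof (rule INF_mono)
  fix \<phi> assume \<phi>: "\<phi> \<in> transport_maps M N"
  interpret M: prob_space M
    using M by (rule mm_space_prob_space)
  interpret pair_sigma_finite M M ..
  let ?D = "\<lambda>z. distortion \<phi> (fst z) (snd z) powr p"
  have "0 \<le> p"
    using \<open>1 \<le> p\<close> by simp
  have D_int: "integrable (M \<Otimes>\<^sub>M M) ?D"
    by (rule integrable_distortion_powr[OF M N measurable_transport_map[OF \<phi>] \<open>0 \<le> p\<close>])
  have J_int: "integrable M (\<lambda>x. \<integral>x'. distortion \<phi> x x' powr p \<partial>M)"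
    using integrable_fst'[OF D_int] by simp
  have J_nonneg: "0 \<le> (\<integral>x'. distortion \<phi> x x' powr p \<partial>M)" for x
    by (rule Bochner_Integration.integral_nonneg) simp
  have root_int: "integrable M (\<lambda>x. (\<integral>x'. distortion \<phi> x x' powr p \<partial>M) powr (1 / p))"
    by (rule M.integrable_powr[OF J_int J_nonneg]) (use \<open>1 \<le> p\<close> in simp_all)
  have "(\<integral>x. A \<phi> x \<partial>M) \<le> (\<integral>x. (\<integral>x'. distortion \<phi> x x' powr p \<partial>M) powr (1 / p) \<partial>M)"
  proof (cases "integrable M (A \<phi>)")
    case True
    then show ?thesis
      by (rule integral_mono[OF _ root_int bound[OF \<phi>]])
  next
    case False
    then show ?thesis
      using J_nonneg by (simp add: not_integrable_integral_eq Bochner_Integration.integral_nonneg)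
  qed
  also have "\<dots> \<le> (integral\<^sup>L (M \<Otimes>\<^sub>M M) ?D) powr (1 / p)"
    using integral_fst_powr_le[OF M.prob_space_axioms D_int _ \<open>1 \<le> p\<close>] by simp
  finally have "(\<integral>x. A \<phi> x \<partial>M)
      \<le> (integral\<^sup>L (M \<Otimes>\<^sub>M M) (\<lambda>(x, x'). \<bar>dist x x' - dist (\<phi> x) (\<phi> x')\<bar> powr p)) powr (1 / p)"
    by (simp add: distortion_def case_prod_beta')
  with \<phi> show "\<exists>\<psi>\<in>transport_maps M N. ereal (\<integral>x. A \<psi> x \<partial>M)
      \<le> ereal ((integral\<^sup>L (M \<Otimes>\<^sub>M M) (\<lambda>(x, x'). \<bar>dist x x' - dist (\<phi> x) (\<phi> x')\<bar> powr p)) powr (1 / p))"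
    by auto
qed

theorem proposition4p2:
  fixes M :: "'a::metric_space measure" and N :: "'b::metric_space measure" and p :: real
  assumes "mm_space M" and "mm_space N" and "1 \<le> p"
  shows "dGM p M N \<ge> (INF \<phi>\<in>transport_maps M N.
            ereal (\<integral>x. (\<integral>u\<in>{0..1}. \<bar>ldd_inv M x u - ldd_inv N (\<phi> x) u\<bar> powr p \<partial>lborel) powr (1 / p) \<partial>M)) \<and>
         dGM 1 M N \<ge> (INF \<phi>\<in>transport_maps M N. ereal (\<integral>x. cost M N x (\<phi> x) \<partial>M))"
proof
  show "dGM p M N \<ge> (INF \<phi>\<in>transport_maps M N.
      ereal (\<integral>x. (\<integral>u\<in>{0..1}. \<bar>ldd_inv M x u - ldd_inv N (\<phi> x) u\<bar> powr p \<partial>lborel) powr (1 / p) \<partial>M))"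
  proof (rule INF_integral_le_dGM[OF assms])
    fix \<phi> x assume \<phi>: "\<phi> \<in> transport_maps M N" and x: "x \<in> space M"
    have "0 \<le> (\<integral>u\<in>{0..1}. \<bar>ldd_inv M x u - ldd_inv N (\<phi> x) u\<bar> powr p \<partial>lborel)"
      unfolding set_lebesgue_integral_def by (rule Bochner_Integration.integral_nonneg) simp
    with quantile_distance_le_distortion[OF assms(1,2) \<phi> x assms(3)] assms(3)
    show "(\<integral>u\<in>{0..1}. \<bar>ldd_inv M x u - ldd_inv N (\<phi> x) u\<bar> powr p \<partial>lborel) powr (1 / p)
        \<le> (\<integral>x'. distortion \<phi> x x' powr p \<partial>M) powr (1 / p)"
      by (intro powr_mono2) simp_all
  qed
  show "dGM 1 M N \<ge> (INF \<phi>\<in>transport_maps M N. ereal (\<integral>x. cost M N x (\<phi> x) \<partial>M))"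
  proof (rule INF_integral_le_dGM[OF assms(1,2)])
    fix \<phi> x assume \<phi>: "\<phi> \<in> transport_maps M N" and x: "x \<in> space M"
    have "0 \<le> (\<integral>x'. distortion \<phi> x x' \<partial>M)"
      by (rule Bochner_Integration.integral_nonneg) (simp add: distortion_def)
    with cost_le_distortion[OF assms(1,2) \<phi> x]
    show "cost M N x (\<phi> x) \<le> (\<integral>x'. distortion \<phi> x x' powr 1 \<partial>M) powr (1 / 1)"
      by (simp add: distortion_def)
  qed simp
qed

end
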